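(* Let $d\ge2$ and let $H$ be a finite family of closed halfspaces in $\mathbb{R}^d$ whose bounding hyperplanes pass through the origin, such that no $h\in H$ is bounded by the hyperplane $T_d=\{x\in\mathbb{R}^d\mid x_d=0\}$. Let $C=\bigcap_{h\in H}h$. If $C\subseteq T_d^>\cup\{0\}$, where $T_d^>=\{x\in\mathbb{R}^d\mid x_d>0\}$, then there is a subfamily $H'\subseteq H$ with $|H'|\le 2d-2$ such that $\bigcap_{h\in H'}h\subseteq T_d^>\cup\{0\}$. *)

theory Defs
  imports "HOL-Analysis.Analysis"
begin

definition origin_halfspace :: "(real^'n) set \<Rightarrow> bool" where
  "origin_halfspace h \<longleftrightarrow> (\<exists>a::real^'n. a \<noteq> 0 \<and> h = {x. inner a x \<le> 0})"

end

theory Submission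
  imports Defs
begin

(* Write each halfspace as {x. a \<bullet> x \<le> 0} and let e be the k-th unit vector. By conic
   duality, a subfamily has its intersection inside T_d^> \<union> {0} exactly when its normals together
   with e span the whole space as a convex cone. So -e lies in the cone of all normals, and a conic
   Caratheodory argument writes it as a positive combination of a linearly independent set T of
   normals, with |T| \<ge> 2 because no normal is parallel to e; then span T lies in the cone of T and e.
   Modulo span T, a Steinitz-type induction on the codimension keeps at most 2 (d - |T|) further
   normals: every step picks a normal b outside the current subspace L and an L-independent set T'
   with b + (positive combination of T') \<in> L, which raises dim L by |T'| at the price of |T'| + 1
   vectors. In total |T| + 2 (d - |T|) \<le> 2d - 2. *)

lemma convex_cone_hull_Un_eq_plus:
  "convex_cone hull (S \<union> T) = convex_cone hull S + convex_cone hull T"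
  by (auto simp: convex_cone_hull_Un set_plus_def)

lemma convex_cone_hull_finite:
  fixes B :: "'a::real_vector set"
  assumes "finite B"
  shows "convex_cone hull B = {\<Sum>c\<in>B. u c *\<^sub>R c | u. \<forall>c\<in>B. 0 \<le> u c}"
    (is "_ = ?E")
proof
  have "convex_cone ?E"
    unfolding convex_cone_iff
  proof (intro conjI ballI allI impI)
    show "0 \<in> ?E" by (rule CollectI, rule exI[of _ "\<lambda>_. 0"]) simp
  next
    fix x y assume "x \<in> ?E" "y \<in> ?E"
    then obtain u v where "\<forall>c\<in>B. 0 \<le> u c" "x = (\<Sum>c\<in>B. u c *\<^sub>R c)"
      "\<forall>c\<in>B. 0 \<le> v c" "y = (\<Sum>c\<in>B. v c *\<^sub>R c)" by auto
    then show "x + y \<in> ?E"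
      by (intro CollectI exI[of _ "\<lambda>c. u c + v c"]) (simp add: scaleR_add_left sum.distrib)
  next
    fix x and t :: real assume "x \<in> ?E" "0 \<le> t"
    then obtain u where "\<forall>c\<in>B. 0 \<le> u c" "x = (\<Sum>c\<in>B. u c *\<^sub>R c)" by auto
    with \<open>0 \<le> t\<close> show "t *\<^sub>R x \<in> ?E"
      by (intro CollectI exI[of _ "\<lambda>c. t * u c"]) (simp add: scaleR_sum_right)
  qed
  moreover have "B \<subseteq> ?E"
  proof
    fix b assume "b \<in> B"
    then have "(\<Sum>c\<in>B. (if c = b then 1 else 0) *\<^sub>R c) = b"
      using assms by (simp add: if_distrib[of "\<lambda>t. t *\<^sub>R _"] cong: if_cong)
    then show "b \<in> ?E"
      by (intro CollectI exI[of _ "\<lambda>c. if c = b then 1 else 0"]) auto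
  qed
  ultimately show "convex_cone hull B \<subseteq> ?E" by (rule hull_minimal[rotated])
next
  have "(\<Sum>c\<in>T. u c *\<^sub>R c) \<in> convex_cone hull B"
    if "finite T" "T \<subseteq> B" "\<forall>c\<in>T. 0 \<le> u c" for T u
    using that
    by (induction T rule: finite_induct)
       (simp_all add: convex_cone_hull_contains_0 convex_cone_hull_add convex_cone_hull_mul hull_inc)
  then show "?E \<subseteq> convex_cone hull B" using assms by blast
qed

lemma convex_cone_hull_insert:
  fixes X :: "'a::real_vector set"
  shows "convex_cone hull (insert b X) = {t *\<^sub>R b + y | t y. 0 \<le> t \<and> y \<in> convex_cone hull X}"
proof -
  have "convex_cone hull {b} = {t *\<^sub>R b | t. 0 \<le> t}"
    by (auto simp: convex_cone_hull_finite)
  then show ?thesis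
    using convex_cone_hull_Un_eq_plus[of "{b}" X] by (auto simp: set_plus_def)
qed

lemma convex_cone_hull_eq_UNIV_iff:
  fixes A :: "'a::euclidean_space set"
  assumes "finite A"
  shows "convex_cone hull A = UNIV \<longleftrightarrow> (\<forall>y. (\<forall>a\<in>A. inner a y \<le> 0) \<longrightarrow> y = 0)"
proof
  assume full: "convex_cone hull A = UNIV"
  show "\<forall>y. (\<forall>a\<in>A. inner a y \<le> 0) \<longrightarrow> y = 0"
  proof (intro allI impI)
    fix y assume "\<forall>a\<in>A. inner a y \<le> 0"
    moreover have "convex_cone {c. inner c y \<le> 0}"
      by (auto simp: convex_cone_iff inner_add_left mult_nonneg_nonpos)
    ultimately have "convex_cone hull A \<subseteq> {c. inner c y \<le> 0}"
      by (intro hull_minimal) auto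
    then show "y = 0" using full by (metis UNIV_I inner_gt_zero_iff mem_Collect_eq not_le subsetD)
  qed
next
  assume polar: "\<forall>y. (\<forall>a\<in>A. inner a y \<le> 0) \<longrightarrow> y = 0"
  show "convex_cone hull A = UNIV"
  proof (rule ccontr)
    assume "convex_cone hull A \<noteq> UNIV"
    then obtain z where z: "z \<notin> convex_cone hull A" by blast
    obtain w \<beta> where w: "inner w z < \<beta>" "\<forall>x\<in>convex_cone hull A. \<beta> < inner w x"
      using separating_hyperplane_closed_point[OF _ _ z]
        convex_convex_cone_hull closed_convex_cone_hull assms by blast
    have "\<beta> < 0" using w(2) convex_cone_hull_contains_0 by fastforce
    \<comment> \<open>A cone on which a linear functional is bounded below lies in its nonnegative side.\<close>
    have "0 \<le> inner w x" if "x \<in> convex_cone hull A" for x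
    proof (rule ccontr)
      assume neg: "\<not> 0 \<le> inner w x"
      define t where "t = \<beta> / inner w x"
      have "0 \<le> t" using neg \<open>\<beta> < 0\<close> by (simp add: t_def divide_nonpos_neg)
      then have "\<beta> < inner w (t *\<^sub>R x)" using w(2) that convex_cone_hull_mul by blast
      then show False using neg by (simp add: t_def)
    qed
    then have "\<forall>a\<in>A. inner a (- w) \<le> 0" by (simp add: hull_inc inner_commute)
    then have "w = 0" using polar by fastforce
    then show False using w \<open>\<beta> < 0\<close> by simp
  qed
qed

lemma neg_in_convex_cone_hull_if_insert_eq_UNIV:
  assumes "convex_cone hull (insert b A) = UNIV"
  shows "- b \<in> convex_cone hull A"
proof -
  have "- b \<in> convex_cone hull (insert b A)" using assms by simp
  then obtain t y where ty: "- b = t *\<^sub>R b + y" "0 \<le> t" "y \<in> convex_cone hull A"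
    unfolding convex_cone_hull_insert by blast
  then have "y = - ((1 + t) *\<^sub>R b)" by (simp add: algebra_simps)
  then have "- b = inverse (1 + t) *\<^sub>R y" using ty(2) by simp
  then show ?thesis using ty(2,3) by (simp add: convex_cone_hull_mul)
qed

lemma subspace_plus_convex_cone_hull_eq_UNIV:
  assumes "subspace M" "b \<in> M" "convex_cone hull (insert b A) = UNIV"
  shows "M + convex_cone hull A = UNIV"
proof -
  have "v \<in> M + convex_cone hull A" for v
  proof -
    have "v \<in> convex_cone hull (insert b A)" using assms(3) by simp
    then obtain t y where "v = t *\<^sub>R b + y" "y \<in> convex_cone hull A"
      unfolding convex_cone_hull_insert by blast
    moreover have "t *\<^sub>R b \<in> M" using assms(1,2) by (rule subspace_mul)
    ultimately show ?thesis by blast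
  qed
  then show ?thesis by blast
qed

lemma plus_convex_cone_hull_Un_eq_UNIV:
  assumes "M \<subseteq> L + convex_cone hull X" "M + convex_cone hull Y = UNIV"
  shows "L + convex_cone hull (X \<union> Y) = UNIV"
proof -
  have "UNIV = M + convex_cone hull Y" using assms(2) by simp
  also have "\<dots> \<subseteq> (L + convex_cone hull X) + convex_cone hull Y"
    using assms(1) by (rule set_plus_mono2) simp
  also have "\<dots> = L + convex_cone hull (X \<union> Y)"
    by (simp only: convex_cone_hull_Un_eq_plus add.assoc)
  finally show ?thesis by blast
qed

lemma convex_cone_hull_not_subset_subspace:
  assumes "subspace L" "L \<noteq> UNIV" "L + convex_cone hull B = UNIV"
  shows "\<not> B \<subseteq> L"
proof
  assume "B \<subseteq> L"
  then have "convex_cone hull B \<subseteq> L"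
    by (intro hull_minimal) (simp_all add: assms(1) subspace_imp_convex_cone)
  then have "L + convex_cone hull B \<subseteq> L"
    using assms(1) by (auto elim!: set_plus_elim simp: subspace_add)
  then show False using assms(2,3) by auto
qed

(* For finite T: the classes of the elements of T modulo L are distinct and linearly independent. *)
definition independent_modulo :: "'a::real_vector set \<Rightarrow> 'a set \<Rightarrow> bool" where
  "independent_modulo L T \<longleftrightarrow> (\<forall>\<mu>. (\<Sum>c\<in>T. \<mu> c *\<^sub>R c) \<in> L \<longrightarrow> (\<forall>c\<in>T. \<mu> c = 0))"

lemma not_independent_moduloE:
  assumes "subspace L" "\<not> independent_modulo L B"
  obtains \<nu> c where "(\<Sum>c\<in>B. \<nu> c *\<^sub>R c) \<in> L" "c \<in> B" "0 < \<nu> c"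
proof -
  obtain \<mu> c where \<mu>: "(\<Sum>c\<in>B. \<mu> c *\<^sub>R c) \<in> L" "c \<in> B" "\<mu> c \<noteq> 0"
    using assms(2) unfolding independent_modulo_def by blast
  show thesis
  proof (cases "0 < \<mu> c")
    case True
    then show ?thesis using that \<mu> by blast
  next
    case False
    have "(\<Sum>c\<in>B. (- \<mu> c) *\<^sub>R c) \<in> L"
      using subspace_neg[OF assms(1) \<mu>(1)] by (simp add: sum_negf)
    then show ?thesis using that[of "\<lambda>c. - \<mu> c"] \<mu>(2,3) False by simp
  qed
qed

lemma conic_combination_exchange:
  fixes B :: "'a::real_vector set"
  assumes "finite B" "subspace L" "\<forall>c\<in>B. 0 < u c"
    and "(\<Sum>c\<in>B. \<nu> c *\<^sub>R c) \<in> L" "c1 \<in> B" "0 < \<nu> c1"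
  obtains u' c2 where "\<forall>c\<in>B. 0 \<le> u' c" "c2 \<in> B" "u' c2 = 0"
    "(\<Sum>c\<in>B. u' c *\<^sub>R c) - (\<Sum>c\<in>B. u c *\<^sub>R c) \<in> L"
proof -
  define P where "P = {c\<in>B. 0 < \<nu> c}"
  have P: "finite P" "c1 \<in> P" using assms by (auto simp: P_def)
  define t where "t = Min ((\<lambda>c. u c / \<nu> c) ` P)"
  have "t \<in> (\<lambda>c. u c / \<nu> c) ` P" unfolding t_def using P by (intro Min_in) auto
  then obtain c2 where c2: "c2 \<in> P" "t = u c2 / \<nu> c2" by blast
  have t_le: "t \<le> u c / \<nu> c" if "c \<in> P" for c
    unfolding t_def using P that by (intro Min_le) auto
  have "0 < t" using c2 assms(3) by (auto simp: P_def)
  define u' where "u' c = u c - t * \<nu> c" for c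
  have "0 \<le> u' c" if "c \<in> B" for c
  proof (cases "0 < \<nu> c")
    case True
    then have "t * \<nu> c \<le> u c" using t_le[of c] that by (simp add: P_def le_divide_eq)
    then show ?thesis by (simp add: u'_def)
  next
    case False
    then have "t * \<nu> c \<le> 0" using \<open>0 < t\<close> by (simp add: mult_nonneg_nonpos)
    moreover have "0 < u c" using assms(3) that by blast
    ultimately show ?thesis by (simp add: u'_def)
  qed
  moreover have "u' c2 = 0" using c2 by (auto simp: u'_def P_def)
  moreover have "(\<Sum>c\<in>B. u' c *\<^sub>R c) - (\<Sum>c\<in>B. u c *\<^sub>R c) = - t *\<^sub>R (\<Sum>c\<in>B. \<nu> c *\<^sub>R c)"
    by (simp add: u'_def scaleR_diff_left sum_subtractf scaleR_sum_right sum_negf)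
  then have "(\<Sum>c\<in>B. u' c *\<^sub>R c) - (\<Sum>c\<in>B. u c *\<^sub>R c) \<in> L"
    using assms(2,4) by (simp add: subspace_mul subspace_neg)
  ultimately show thesis using that c2(1) by (auto simp: P_def)
qed

lemma conic_caratheodory_modulo:
  fixes B :: "'a::real_vector set"
  assumes "finite B" "subspace L" "\<forall>c\<in>B. 0 \<le> u c" "y - (\<Sum>c\<in>B. u c *\<^sub>R c) \<in> L"
  shows "\<exists>T\<subseteq>B. \<exists>w. (\<forall>c\<in>T. 0 < w c) \<and> y - (\<Sum>c\<in>T. w c *\<^sub>R c) \<in> L \<and> independent_modulo L T"
  using assms
proof (induction "card B" arbitrary: B u rule: less_induct)
  case less
  have drop: ?case if v: "\<forall>c\<in>B. 0 \<le> v c" "y - (\<Sum>c\<in>B. v c *\<^sub>R c) \<in> L" "c \<in> B" "v c = 0" for v c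
  proof -
    have "(\<Sum>d\<in>B. v d *\<^sub>R d) = (\<Sum>d\<in>B - {c}. v d *\<^sub>R d)"
      using v less.prems(1) by (simp add: sum.remove)
    moreover have "card (B - {c}) < card B" using v less.prems(1) by (meson card_Diff1_less)
    ultimately have "\<exists>T\<subseteq>B - {c}. \<exists>w. (\<forall>c\<in>T. 0 < w c) \<and> y - (\<Sum>c\<in>T. w c *\<^sub>R c) \<in> L
        \<and> independent_modulo L T"
      using v less.prems by (intro less.hyps[of "B - {c}" v]) auto
    then show ?thesis by blast
  qed
  show ?case
  proof (cases "\<exists>c\<in>B. u c = 0")
    case True
    then show ?thesis using drop less.prems by blast
  next
    case False
    then have pos: "\<forall>c\<in>B. 0 < u c" using less.prems(3) by force
    show ?thesis
    proof (cases "independent_modulo L B")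
      case True
      then show ?thesis using pos less.prems by blast
    next
      case False
      then obtain \<nu> c1 where "(\<Sum>c\<in>B. \<nu> c *\<^sub>R c) \<in> L" "c1 \<in> B" "0 < \<nu> c1"
        using not_independent_moduloE less.prems(2) by blast
      then obtain u' c2 where u': "\<forall>c\<in>B. 0 \<le> u' c" "c2 \<in> B" "u' c2 = 0"
          "(\<Sum>c\<in>B. u' c *\<^sub>R c) - (\<Sum>c\<in>B. u c *\<^sub>R c) \<in> L"
        using conic_combination_exchange[OF less.prems(1,2) pos] by blast
      have "y - (\<Sum>c\<in>B. u' c *\<^sub>R c) =
          (y - (\<Sum>c\<in>B. u c *\<^sub>R c)) - ((\<Sum>c\<in>B. u' c *\<^sub>R c) - (\<Sum>c\<in>B. u c *\<^sub>R c))"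
        by simp
      also have "\<dots> \<in> L" using less.prems(2,4) u'(4) by (rule subspace_diff)
      finally show ?thesis using drop u' by blast
    qed
  qed
qed

lemma dim_span_Un_independent_modulo:
  fixes T :: "'a::euclidean_space set"
  assumes "finite T" "subspace L" "independent_modulo L T"
  shows "dim (span (L \<union> T)) = dim L + card T"
proof -
  have "L \<inter> span T = {0}"
  proof -
    have "x = 0" if x: "x \<in> L" "x \<in> span T" for x
    proof -
      obtain \<alpha> where "x = (\<Sum>c\<in>T. \<alpha> c *\<^sub>R c)" using x(2) span_finite[OF assms(1)] by auto
      moreover have "\<forall>c\<in>T. \<alpha> c = 0"
        using calculation x(1) assms(3) unfolding independent_modulo_def by blast
      ultimately show ?thesis by simp
    qed
    then show ?thesis using assms(2) by (auto simp: subspace_0)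
  qed
  moreover have "independent T"
    using assms(1,3) subspace_0[OF assms(2)] by (auto simp: independent_modulo_def dependent_finite)
  then have "dim (span T) = card T" by (rule dim_span_eq_card_independent)
  moreover have "span (L \<union> T) = {x + y | x y. x \<in> L \<and> y \<in> span T}"
    using span_Un[of L T] span_eq_iff[THEN iffD2, OF assms(2)] by simp
  ultimately show ?thesis
    using dim_sums_Int[OF assms(2) subspace_span[of T]] by simp
qed

lemma span_Un_subset_plus_convex_cone_hull:
  fixes T :: "'a::real_vector set"
  assumes "finite T" "subspace L" "\<forall>c\<in>T. 0 < w c" "b + (\<Sum>c\<in>T. w c *\<^sub>R c) \<in> L"
  shows "span (L \<union> T) \<subseteq> L + convex_cone hull (insert b T)"
proof
  fix x assume "x \<in> span (L \<union> T)"
  then obtain y z where yz: "x = y + z" "y \<in> L" "z \<in> span T"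
    using span_Un[of L T] span_eq_iff[THEN iffD2, OF assms(2)] by auto
  obtain \<alpha> where z: "z = (\<Sum>c\<in>T. \<alpha> c *\<^sub>R c)" using yz(3) span_finite[OF assms(1)] by auto
  \<comment> \<open>Adding a large multiple \<open>t\<close> of \<open>b + \<Sum>c\<in>T. w c *\<^sub>R c \<in> L\<close> makes all coefficients nonnegative.\<close>
  define t where "t = (\<Sum>c\<in>T. \<bar>\<alpha> c\<bar> / w c)"
  have "0 \<le> t" unfolding t_def using assms(3) by (intro sum_nonneg) auto
  have "\<bar>\<alpha> c\<bar> \<le> t * w c" if "c \<in> T" for c
  proof -
    have "\<bar>\<alpha> c\<bar> / w c \<le> t" unfolding t_def using assms(1,3) that
      by (intro member_le_sum) auto
    then show ?thesis using assms(3) that by (simp add: divide_le_eq)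
  qed
  then have "0 \<le> \<alpha> c + t * w c" if "c \<in> T" for c
    using abs_le_D2[of "\<alpha> c"] that by fastforce
  then have "(\<Sum>c\<in>T. (\<alpha> c + t * w c) *\<^sub>R c) \<in> convex_cone hull T"
    unfolding convex_cone_hull_finite[OF assms(1)] by (auto intro!: exI[of _ "\<lambda>c. \<alpha> c + t * w c"])
  then have "t *\<^sub>R b + (\<Sum>c\<in>T. (\<alpha> c + t * w c) *\<^sub>R c) \<in> convex_cone hull (insert b T)"
    using \<open>0 \<le> t\<close> hull_mono[of T "insert b T"]
    by (intro convex_cone_hull_add) (auto simp: convex_cone_hull_mul hull_inc)
  moreover have "y - t *\<^sub>R (b + (\<Sum>c\<in>T. w c *\<^sub>R c)) \<in> L"
    using yz(2) assms(2,4) by (simp add: subspace_diff subspace_mul)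
  moreover have "x = (y - t *\<^sub>R (b + (\<Sum>c\<in>T. w c *\<^sub>R c))) + (t *\<^sub>R b + (\<Sum>c\<in>T. (\<alpha> c + t * w c) *\<^sub>R c))"
    by (simp add: yz(1) z sum.distrib scaleR_sum_right algebra_simps)
  ultimately show "x \<in> L + convex_cone hull (insert b T)" by blast
qed

lemma conic_subspace_extension:
  fixes B :: "'a::euclidean_space set"
  assumes "finite B" "subspace L" "- b \<in> L + convex_cone hull B"
  obtains T where "T \<subseteq> B" "dim (span (L \<union> T)) = dim L + card T" "b \<in> span (L \<union> T)"
    "span (L \<union> T) \<subseteq> L + convex_cone hull (insert b T)"
proof -
  obtain l u where lu: "- b = l + (\<Sum>c\<in>B. u c *\<^sub>R c)" "l \<in> L" "\<forall>c\<in>B. 0 \<le> u c"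
    using assms(3) by (auto elim!: set_plus_elim simp: convex_cone_hull_finite[OF assms(1)])
  then have "- b - (\<Sum>c\<in>B. u c *\<^sub>R c) \<in> L" by simp
  then obtain T w where T: "T \<subseteq> B" "\<forall>c\<in>T. 0 < w c" "- b - (\<Sum>c\<in>T. w c *\<^sub>R c) \<in> L"
      "independent_modulo L T"
    using conic_caratheodory_modulo[OF assms(1,2) lu(3)] by blast
  have "finite T" using T(1) assms(1) finite_subset by blast
  have bT: "b + (\<Sum>c\<in>T. w c *\<^sub>R c) \<in> L"
    using subspace_neg[OF assms(2) T(3)] by (simp add: add.commute)
  have "b = (b + (\<Sum>c\<in>T. w c *\<^sub>R c)) - (\<Sum>c\<in>T. w c *\<^sub>R c)" by simp
  also have "\<dots> \<in> span (L \<union> T)"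
    using bT by (intro span_diff span_sum span_scale) (auto intro: span_base)
  finally have "b \<in> span (L \<union> T)" .
  then show thesis
    using that T(1) dim_span_Un_independent_modulo[OF \<open>finite T\<close> assms(2) T(4)]
      span_Un_subset_plus_convex_cone_hull[OF \<open>finite T\<close> assms(2) T(2) bT] by blast
qed

lemma conic_steinitz_modulo:
  fixes B :: "'a::euclidean_space set"
  assumes "finite B" "subspace L" "L + convex_cone hull B = UNIV"
  shows "\<exists>S\<subseteq>B. card S \<le> 2 * (DIM('a) - dim L) \<and> L + convex_cone hull S = UNIV"
  using assms(2,3)
proof (induction "DIM('a) - dim L" arbitrary: L rule: less_induct)
  case less
  show ?case
  proof (cases "L = UNIV")
    case True
    then have "L + convex_cone hull {} = UNIV" by (auto simp: set_plus_def)
    then show ?thesis by (intro exI[of _ "{}"]) auto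
  next
    case False
    then obtain b where b: "b \<in> B" "b \<notin> L"
      using convex_cone_hull_not_subset_subspace less.prems by blast
    obtain T where T: "T \<subseteq> B" "dim (span (L \<union> T)) = dim L + card T" "b \<in> span (L \<union> T)"
        "span (L \<union> T) \<subseteq> L + convex_cone hull (insert b T)"
      using conic_subspace_extension[OF assms(1) less.prems(1), of b] less.prems(2) by blast
    define L' where "L' = span (L \<union> T)"
    have "finite T" using T(1) assms(1) finite_subset by blast
    moreover have "T \<noteq> {}" using T(3) b(2) less.prems(1) by (metis Un_empty_right span_eq_iff)
    ultimately have "0 < card T" by auto
    then have "DIM('a) - dim L' < DIM('a) - dim L"
      using T(2) dim_subset_UNIV[of L'] unfolding L'_def by linarith
    moreover have "L' + convex_cone hull B = UNIV"
      using less.prems(2) set_plus_mono2[of L L' "convex_cone hull B" "convex_cone hull B"]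
        span_superset[of "L \<union> T"]
      unfolding L'_def by blast
    ultimately obtain S' where S': "S' \<subseteq> B" "card S' \<le> 2 * (DIM('a) - dim L')"
        "L' + convex_cone hull S' = UNIV"
      using less.hyps[of L'] unfolding L'_def by (meson subspace_span)
    define S where "S = insert b T \<union> S'"
    have "card S \<le> card (insert b T) + card S'" unfolding S_def by (rule card_Un_le)
    also have "\<dots> \<le> Suc (card T) + card S'" using \<open>finite T\<close> by (simp add: card_insert_if)
    finally have "card S \<le> 2 * (DIM('a) - dim L)"
      using S'(2) T(2) \<open>0 < card T\<close> dim_subset_UNIV[of L'] unfolding L'_def by linarith
    moreover have "L + convex_cone hull S = UNIV"
      using T(4) S'(3) unfolding S_def L'_def by (rule plus_convex_cone_hull_Un_eq_UNIV)
    moreover have "S \<subseteq> B" unfolding S_def using S'(1) T(1) b(1) by auto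
    ultimately show ?thesis by blast
  qed
qed

lemma conic_steinitz_insert:
  fixes A :: "'a::euclidean_space set"
  assumes "finite A" "b \<noteq> 0" "convex_cone hull (insert b A) = UNIV" "\<forall>c\<in>A. b \<notin> span {c}"
  shows "\<exists>S\<subseteq>A. card S \<le> 2 * DIM('a) - 2 \<and> convex_cone hull (insert b S) = UNIV"
proof -
  have "- b \<in> {0} + convex_cone hull A"
    using neg_in_convex_cone_hull_if_insert_eq_UNIV[OF assms(3)] by simp
  then obtain T where T: "T \<subseteq> A" "dim (span T) = card T" "b \<in> span T"
      "span T \<subseteq> convex_cone hull (insert b T)"
    using conic_subspace_extension[OF assms(1) subspace_single_0, of b] by auto
  have "finite T" using T(1) assms(1) finite_subset by blast
  have "2 \<le> card T"
  proof -
    have "card T \<noteq> 0" using T(3) assms(2) \<open>finite T\<close> by auto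
    moreover have "card T \<noteq> 1"
    proof
      assume "card T = 1"
      then obtain c where "T = {c}" by (auto simp: card_1_singleton_iff)
      then show False using T(1,3) assms(4) by auto
    qed
    ultimately show ?thesis by linarith
  qed
  have cover: "span T + convex_cone hull A = UNIV"
    using subspace_plus_convex_cone_hull_eq_UNIV[OF subspace_span T(3) assms(3)] .
  obtain S' where S': "S' \<subseteq> A" "card S' \<le> 2 * (DIM('a) - card T)"
      "span T + convex_cone hull S' = UNIV"
    using conic_steinitz_modulo[OF assms(1) subspace_span cover] unfolding T(2) by blast
  define S where "S = T \<union> S'"
  have "card S \<le> card T + card S'" unfolding S_def by (rule card_Un_le)
  then have "card S \<le> 2 * DIM('a) - 2"
    using S'(2) \<open>2 \<le> card T\<close> dim_subset_UNIV[of "span T"] T(2) by linarith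
  moreover have "convex_cone hull (insert b S) = UNIV"
    using plus_convex_cone_hull_Un_eq_UNIV[of "span T" "{0}" "insert b T" S'] T(4) S'(3)
    by (simp add: S_def)
  ultimately show ?thesis using S'(1) T(1) unfolding S_def by blast
qed

definition halfspace_normal :: "(real^'n) set \<Rightarrow> real^'n" where
  "halfspace_normal h = (SOME a. a \<noteq> 0 \<and> h = {x. inner a x \<le> 0})"

lemma origin_halfspace_normal:
  assumes "origin_halfspace h"
  shows "halfspace_normal h \<noteq> 0" "h = {x. inner (halfspace_normal h) x \<le> 0}"
  using someI_ex[OF assms[unfolded origin_halfspace_def]] unfolding halfspace_normal_def by auto

lemma inj_on_halfspace_normal: "inj_on halfspace_normal {h. origin_halfspace h}"
  by (rule inj_onI) (metis mem_Collect_eq origin_halfspace_normal(2))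

lemma axis_notin_span_halfspace_normal:
  assumes "origin_halfspace h" "frontier h \<noteq> {x. x $ k = 0}"
  shows "axis k 1 \<notin> span {halfspace_normal h}"
proof
  assume "axis k 1 \<in> span {halfspace_normal h}"
  then obtain t where t: "axis k 1 = t *\<^sub>R halfspace_normal h" by (auto simp: span_singleton)
  then have "t \<noteq> 0" by auto
  have "frontier h = {x. inner (halfspace_normal h) x = 0}"
    using origin_halfspace_normal[OF assms(1)] frontier_halfspace_le by metis
  also have "\<dots> = {x. inner (axis k 1) x = 0}" using \<open>t \<noteq> 0\<close> by (simp add: t)
  also have "\<dots> = {x. x $ k = 0}" by (simp add: inner_axis')
  finally show False using assms(2) by blast
qed

lemma Inter_origin_halfspaces_subset_iff:
  fixes G :: "(real^'n) set set"
  assumes "finite G" "\<forall>h\<in>G. origin_halfspace h"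
  shows "\<Inter>G \<subseteq> {x. x $ k > 0} \<union> {0} \<longleftrightarrow>
    convex_cone hull (insert (axis k 1) (halfspace_normal ` G)) = UNIV"
proof -
  have "\<Inter>G = {x. \<forall>h\<in>G. inner (halfspace_normal h) x \<le> 0}"
    using assms(2) origin_halfspace_normal(2) by blast
  then show ?thesis
    using assms(1) by (subst convex_cone_hull_eq_UNIV_iff) (auto simp: inner_axis' not_less)
qed

theorem lemma13:
  fixes H :: "(real^'n) set set" and k :: 'n
  assumes "CARD('n) \<ge> 2"
    and "finite H"
    and "\<forall>h\<in>H. origin_halfspace h"
    and "\<forall>h\<in>H. frontier h \<noteq> {x. x $ k = 0}"
    and "\<Inter>H \<subseteq> {x. x $ k > 0} \<union> {0}"
  shows "\<exists>H'\<subseteq>H. card H' \<le> 2 * CARD('n) - 2 \<and> \<Inter>H' \<subseteq> {x. x $ k > 0} \<union> {0}"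
proof -
  let ?e = "axis k 1 :: real^'n"
  have "finite (halfspace_normal ` H)" using assms(2) by simp
  moreover have "?e \<noteq> 0" by simp
  moreover have "convex_cone hull (insert ?e (halfspace_normal ` H)) = UNIV"
    using Inter_origin_halfspaces_subset_iff assms(2,3,5) by blast
  moreover have "\<forall>c\<in>halfspace_normal ` H. ?e \<notin> span {c}"
    using axis_notin_span_halfspace_normal assms(3,4) by blast
  ultimately have "\<exists>S\<subseteq>halfspace_normal ` H. card S \<le> 2 * DIM(real^'n) - 2
      \<and> convex_cone hull (insert ?e S) = UNIV"
    by (rule conic_steinitz_insert)
  then obtain S where S: "S \<subseteq> halfspace_normal ` H" "card S \<le> 2 * CARD('n) - 2"
      "convex_cone hull (insert ?e S) = UNIV"
    by auto
  obtain H' where H': "H' \<subseteq> H" "S = halfspace_normal ` H'"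
    using S(1) by (meson subset_image_iff)
  have "finite H'" using H'(1) assms(2) by (rule finite_subset)
  have halfspaces: "\<forall>h\<in>H'. origin_halfspace h" using H'(1) assms(3) by blast
  have "\<Inter>H' \<subseteq> {x. x $ k > 0} \<union> {0}"
    using Inter_origin_halfspaces_subset_iff[OF \<open>finite H'\<close> halfspaces, of k] S(3) H'(2) by simp
  moreover have "inj_on halfspace_normal H'"
    using halfspaces by (intro inj_on_subset[OF inj_on_halfspace_normal]) blast
  then have "card H' = card S" by (simp add: H'(2) card_image)
  ultimately show ?thesis using H'(1) S(2) by (intro exI[of _ H']) simp
qed

end
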